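(* Let $F$ be a nonarchimedean local field of characteristic zero with ramification index $e$ and residue degree $f$, and let $D^F$ and $\rho_F$ be as in the context. Let $a:F\to\mathbb{C}$ be a continuous function such that $|a(x)|=\mathcal{O}\!\left(\frac{1}{1+|x|^{\alpha}}\right)$ for some $\alpha>1$ with $\alpha>ef/2$. Then $\rho_F(a)(D^F)^{-1}$ (defined on the range of $D^F$, which is dense) is a compact operator on $H^F$.
   Context: Let $p$ be a prime and $F$ a finite extension of $\mathbb{Q}_p$ with absolute value $|\cdot|$ extending the $p$-adic one; $R=\{|x|\le1\}$, $\pi$ a uniformizer with $|\pi|=p^{-1/e}$, residue field $R/(\pi)$ of size $p^f$, and $S=\{s_0=0,s_1,\dots,s_{p^f-1}\}\subset R$ a set of representatives of $R/(\pi)$ containing $0$. For $n\in\mathbb{Z}$ let $X_n^F=\{\sum_{k=k_0}^{n-1}x_k\pi^k: k_0\in\mathbb{Z},\ x_k\in S\}$ (one point in each ball of $F$ of radius $p^{-n/e}$). Let $H^F$ be the Hilbert space of families $\phi=(\phi_n)_{n\in\mathbb{Z}}$, $\phi_n:X_n^F\to\mathbb{C}$, with $\|\phi\|^2=\sum_{n\in\mathbb{Z}}\sum_{x\in X_n^F}|\phi_n(x)|^2p^{-nf}<\infty$. Define $(D\phi)_n(x)=p^{n/e}\big(\phi_n(x)-p^{-f}\sum_{s\in S}\phi_{n+1}(x+s\pi^n)\big)$ and let $D^F$ be $D$ on its maximal domain in $H^F$; $D^F$ is injective. For $a\in C_0(F)$ (or any bounded continuous $a$) define $\rho_F(a)$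 on $H^F$ by $(\rho_F(a)\phi)_n(x)=a(x)\phi_n(x)$ if $0\ne x\in X_n^F$ and $(\rho_F(a)\phi)_n(0)=a(\pi^{n})\phi_n(0)$. *)

theory Defs
  imports "HOL-Analysis.Analysis"
begin

definition nonarch_abs :: "('a::field \<Rightarrow> real) \<Rightarrow> bool" where
  "nonarch_abs v \<longleftrightarrow> (\<forall>x. v x \<ge> 0) \<and> (\<forall>x. v x = 0 \<longleftrightarrow> x = 0) \<and>
     (\<forall>x y. v (x * y) = v x * v y) \<and> (\<forall>x y. v (x + y) \<le> max (v x) (v y))"

text \<open>The field (of characteristic zero) with absolute value v is a nonarchimedean local field
  of characteristic zero: v extends the p-adic absolute value (|p| = 1/p), the field is complete,
  v is discrete with uniformizer pi, |pi| = p^(-1/e), and S (containing 0) is a set of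
  representatives of the residue field R/(pi), which has p^f elements.\<close>
definition local_field_data ::
  "('a::field_char_0 \<Rightarrow> real) \<Rightarrow> nat \<Rightarrow> nat \<Rightarrow> nat \<Rightarrow> 'a \<Rightarrow> 'a set \<Rightarrow> bool" where
  "local_field_data v p e f \<pi> S \<longleftrightarrow>
     nonarch_abs v \<and> prime p \<and> e \<ge> 1 \<and> f \<ge> 1 \<and>
     v (of_nat p) = 1 / real p \<and>
     (\<forall>X::nat \<Rightarrow> 'a. (\<forall>\<epsilon>>0. \<exists>N. \<forall>m\<ge>N. \<forall>n\<ge>N. v (X m - X n) < \<epsilon>) \<longrightarrow>
        (\<exists>L. \<forall>\<epsilon>>0. \<exists>N. \<forall>n\<ge>N. v (X n - L) < \<epsilon>)) \<and>
     v \<pi> = real p powr (- 1 / real e) \<and>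
     (\<forall>x. x \<noteq> 0 \<longrightarrow> (\<exists>k::int. v x = v \<pi> powi k)) \<and>
     finite S \<and> card S = p ^ f \<and> 0 \<in> S \<and> S \<subseteq> {r. v r \<le> 1} \<and>
     (\<forall>r. v r \<le> 1 \<longrightarrow> (\<exists>!s. s \<in> S \<and> v (r - s) < 1))"

definition v_continuous :: "('a::field \<Rightarrow> real) \<Rightarrow> ('a \<Rightarrow> complex) \<Rightarrow> bool" where
  "v_continuous v a \<longleftrightarrow>
     (\<forall>x. \<forall>\<epsilon>>0. \<exists>\<delta>>0. \<forall>y. v (y - x) < \<delta> \<longrightarrow> cmod (a y - a x) < \<epsilon>)"

definition Xset :: "'a::field \<Rightarrow> 'a set \<Rightarrow> int \<Rightarrow> 'a set" where
  "Xset \<pi> S n = {x. \<exists>(k0::int) (c::int \<Rightarrow> 'a). (\<forall>k. c k \<in> S) \<and>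
                      x = (\<Sum>k\<in>{k0..<n}. c k * \<pi> powi k)}"

definition wt :: "nat \<Rightarrow> nat \<Rightarrow> int \<Rightarrow> real" where
  "wt p f n = real p powr (- (real_of_int n * real f))"

text \<open>Squared norm on H^F (elements: phi n x, with phi n x = 0 off X_n).\<close>
definition hnorm2 :: "nat \<Rightarrow> nat \<Rightarrow> 'a::field \<Rightarrow> 'a set \<Rightarrow> (int \<Rightarrow> 'a \<Rightarrow> complex) \<Rightarrow> real" where
  "hnorm2 p f \<pi> S \<phi> =
     (\<Sum>\<^sub>\<infinity>(n, x) \<in> Sigma UNIV (Xset \<pi> S). (cmod (\<phi> n x))\<^sup>2 * wt p f n)"

definition inH :: "nat \<Rightarrow> nat \<Rightarrow> 'a::field \<Rightarrow> 'a set \<Rightarrow> (int \<Rightarrow> 'a \<Rightarrow> complex) \<Rightarrow> bool" where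
  "inH p f \<pi> S \<phi> \<longleftrightarrow> (\<forall>n x. x \<notin> Xset \<pi> S n \<longrightarrow> \<phi> n x = 0) \<and>
     ((\<lambda>(n, x). (cmod (\<phi> n x))\<^sup>2 * wt p f n) summable_on Sigma UNIV (Xset \<pi> S))"

definition Dop :: "nat \<Rightarrow> nat \<Rightarrow> nat \<Rightarrow> 'a::field \<Rightarrow> 'a set \<Rightarrow>
                   (int \<Rightarrow> 'a \<Rightarrow> complex) \<Rightarrow> int \<Rightarrow> 'a \<Rightarrow> complex" where
  "Dop p e f \<pi> S \<phi> n x =
     (if x \<in> Xset \<pi> S n then
        complex_of_real (real p powr (real_of_int n / real e)) *
          (\<phi> n x - (\<Sum>s\<in>S. \<phi> (n + 1) (x + s * \<pi> powi n)) / of_nat (p ^ f))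
      else 0)"

definition domD :: "nat \<Rightarrow> nat \<Rightarrow> nat \<Rightarrow> 'a::field \<Rightarrow> 'a set \<Rightarrow> (int \<Rightarrow> 'a \<Rightarrow> complex) set" where
  "domD p e f \<pi> S = {\<phi>. inH p f \<pi> S \<phi> \<and> inH p f \<pi> S (Dop p e f \<pi> S \<phi>)}"

definition rho :: "'a::field \<Rightarrow> 'a set \<Rightarrow> ('a \<Rightarrow> complex) \<Rightarrow>
                   (int \<Rightarrow> 'a \<Rightarrow> complex) \<Rightarrow> int \<Rightarrow> 'a \<Rightarrow> complex" where
  "rho \<pi> S a \<phi> n x =
     (if x \<in> Xset \<pi> S n then (if x = 0 then a (\<pi> powi n) * \<phi> n 0 else a x * \<phi> n x) else 0)"

text \<open>rho_F(a) (D^F)^{-1}, defined on ran D^F, is compact: every bounded sequence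
  psi_j = D phi_j (phi_j in dom D^F, so (D^F)^{-1} psi_j = phi_j by injectivity) is mapped to a
  sequence rho(a) phi_j having a Cauchy (hence, H^F being complete, convergent) subsequence.\<close>
definition rhoDinv_compact :: "nat \<Rightarrow> nat \<Rightarrow> nat \<Rightarrow> 'a::field \<Rightarrow> 'a set \<Rightarrow> ('a \<Rightarrow> complex) \<Rightarrow> bool" where
  "rhoDinv_compact p e f \<pi> S a \<longleftrightarrow>
     (\<forall>\<phi>s::nat \<Rightarrow> _.
        (\<forall>j. \<phi>s j \<in> domD p e f \<pi> S) \<and> (\<exists>B::real. \<forall>j. hnorm2 p f \<pi> S (Dop p e f \<pi> S (\<phi>s j)) \<le> B) \<longrightarrow>
        (\<exists>r::nat \<Rightarrow> nat. strict_mono r \<and>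
           (\<forall>\<epsilon>>0. \<exists>N. \<forall>i\<ge>N. \<forall>j\<ge>N.
              hnorm2 p f \<pi> S (rho \<pi> S a (\<phi>s (r i)) - rho \<pi> S a (\<phi>s (r j))) < \<epsilon>)))"

end

(*
  Write D phi = psi level by level: phi_n = q^n psi_n + (mean of phi_(n+1) over the p^f children
  x + s pi^n of each point x of X_n), where q = |pi| = p^(-1/e). Averaging does not increase the
  level norms, and the level norms of phi tend to 0 as n -> oo; hence
  ||phi_n|| <= q^n / (1 - q) * ||D phi||.

  A nonzero point of X_n has |x| > q^n, so on level n the operator rho(a) is multiplication by a
  function bounded by C / (1 + q^(n alpha)). Combined with the estimate above, the level norms of
  rho(a) phi are dominated by ||D phi||^2 times a summable sequence; as n -> -oo this is where
  alpha > 1 enters. On the finitely many remaining levels |a| is small outside a ball, which meets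
  each X_n in finitely many points. So rho(a) (D^F)^-1 maps bounded sets to families with uniformly
  small mass outside finite sets of coordinates, and a diagonal subsequence converging at every
  coordinate is Cauchy in H^F.
*)

theory Submission
  imports Defs "HOL-Library.Diagonal_Subsequence"
begin

section \<open>Weighted square sums\<close>

lemma infsum_tail_small:
  fixes g :: "'i \<Rightarrow> real"
  assumes "g summable_on A" and "\<epsilon> > 0"
  shows "\<exists>F. finite F \<and> F \<subseteq> A \<and> infsum g (A - F) \<le> \<epsilon>"
proof -
  obtain F where F: "finite F" "F \<subseteq> A" "dist (sum g F) (infsum g A) \<le> \<epsilon>"
    using infsum_finite_approximation[OF assms] by blast
  have "infsum g (A - F) = infsum g A - sum g F"
    using F by (simp add: infsum_Diff assms(1))
  with F show ?thesis by (auto simp: dist_real_def)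
qed

lemma le_infsum_single:
  fixes g :: "'i \<Rightarrow> real"
  assumes "g summable_on A" and "\<And>x. x \<in> A \<Longrightarrow> 0 \<le> g x" and "x \<in> A"
  shows "g x \<le> infsum g A"
  using finite_sum_le_infsum[OF assms(1), of "{x}"] assms by auto

lemma norm_average_sq_le:
  fixes z :: "'i \<Rightarrow> 'b::real_normed_vector"
  assumes "finite S" and "S \<noteq> {}"
  shows "(norm (sum z S /\<^sub>R card S))\<^sup>2 \<le> (\<Sum>s\<in>S. (norm (z s))\<^sup>2) / card S"
proof -
  have N: "real (card S) > 0" using assms by (simp add: card_gt_0_iff)
  have "norm (sum z S /\<^sub>R card S) = norm (sum z S) / card S"
    by (simp add: divide_inverse mult.commute)
  also have "\<dots> \<le> (\<Sum>s\<in>S. norm (z s)) / card S"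
    using N norm_sum[of z S] by (simp add: divide_right_mono)
  finally have "norm (sum z S /\<^sub>R card S) \<le> (\<Sum>s\<in>S. norm (z s)) / card S" .
  hence "(norm (sum z S /\<^sub>R card S))\<^sup>2 \<le> ((\<Sum>s\<in>S. norm (z s)) / card S)\<^sup>2"
    by (intro power_mono) auto
  also have "\<dots> \<le> ((\<Sum>s\<in>S. (norm (z s))\<^sup>2) * card S) / (card S)\<^sup>2"
    using sum_squared_le_sum_of_squares[of "\<lambda>s. norm (z s)" S] N
    by (simp add: power_divide divide_right_mono)
  also have "\<dots> = (\<Sum>s\<in>S. (norm (z s))\<^sup>2) / card S"
    using N by (simp add: power2_eq_square)
  finally show ?thesis .
qed

lemma summable_on_weighted_sq_add:
  fixes u z :: "'i \<Rightarrow> 'b::real_normed_vector"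
  assumes "(\<lambda>x. (norm (u x))\<^sup>2 * w x) summable_on A"
    and "(\<lambda>x. (norm (z x))\<^sup>2 * w x) summable_on A"
    and "\<And>x. x \<in> A \<Longrightarrow> 0 \<le> w x"
  shows "(\<lambda>x. (norm (u x + z x))\<^sup>2 * w x) summable_on A"
proof (rule summable_on_comparison_test)
  show "(\<lambda>x. 2 * ((norm (u x))\<^sup>2 * w x) + 2 * ((norm (z x))\<^sup>2 * w x)) summable_on A"
    by (intro summable_on_add summable_on_cmult_right assms)
  fix x assume x: "x \<in> A"
  have "(norm (u x + z x))\<^sup>2 \<le> (norm (u x) + norm (z x))\<^sup>2"
    by (intro power_mono norm_triangle_ineq) auto
  also have "\<dots> \<le> 2 * (norm (u x))\<^sup>2 + 2 * (norm (z x))\<^sup>2"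
    using zero_le_power2[of "norm (u x) - norm (z x)"] unfolding power2_sum power2_diff by linarith
  finally have "(norm (u x + z x))\<^sup>2 \<le> 2 * (norm (u x))\<^sup>2 + 2 * (norm (z x))\<^sup>2" .
  from mult_right_mono[OF this assms(3)[OF x]]
  show "(norm (u x + z x))\<^sup>2 * w x \<le> 2 * ((norm (u x))\<^sup>2 * w x) + 2 * ((norm (z x))\<^sup>2 * w x)"
    by (simp add: algebra_simps)
  show "0 \<le> (norm (u x + z x))\<^sup>2 * w x"
    using assms(3)[OF x] by simp
qed

lemma infsum_weighted_sq_triangle:
  fixes u z :: "'i \<Rightarrow> 'b::real_normed_vector"
  assumes su: "(\<lambda>x. (norm (u x))\<^sup>2 * w x) summable_on A"
    and sz: "(\<lambda>x. (norm (z x))\<^sup>2 * w x) summable_on A"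
    and w: "\<And>x. x \<in> A \<Longrightarrow> 0 \<le> w x"
  shows "sqrt (infsum (\<lambda>x. (norm (u x + z x))\<^sup>2 * w x) A)
          \<le> sqrt (infsum (\<lambda>x. (norm (u x))\<^sup>2 * w x) A) + sqrt (infsum (\<lambda>x. (norm (z x))\<^sup>2 * w x) A)"
    (is "sqrt ?UZ \<le> sqrt ?U + sqrt ?Z")
proof -
  have "?UZ \<le> (sqrt ?U + sqrt ?Z)\<^sup>2"
  proof (rule infsum_le_finite_sums[OF summable_on_weighted_sq_add[OF su sz w]])
    fix F assume F: "finite F" "F \<subseteq> A"
    have wF: "0 \<le> w x" if "x \<in> F" for x using F that w by auto
    have L2: "L2_set (\<lambda>x. norm (y x) * sqrt (w x)) F = sqrt (\<Sum>x\<in>F. (norm (y x))\<^sup>2 * w x)"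
      for y :: "'i \<Rightarrow> 'b"
      unfolding L2_set_def by (intro arg_cong[where f=sqrt] sum.cong) (auto simp: power_mult_distrib wF)
    have partial: "sqrt (\<Sum>x\<in>F. (norm (y x))\<^sup>2 * w x) \<le> sqrt (infsum (\<lambda>x. (norm (y x))\<^sup>2 * w x) A)"
      if "(\<lambda>x. (norm (y x))\<^sup>2 * w x) summable_on A" for y :: "'i \<Rightarrow> 'b"
      using finite_sum_le_infsum[OF that F] w by (auto intro: real_sqrt_le_mono)
    have "L2_set (\<lambda>x. norm (u x + z x) * sqrt (w x)) F
          \<le> L2_set (\<lambda>x. norm (u x) * sqrt (w x) + norm (z x) * sqrt (w x)) F"
    proof (rule L2_set_mono)
      fix x assume "x \<in> F"
      show "norm (u x + z x) * sqrt (w x) \<le> norm (u x) * sqrt (w x) + norm (z x) * sqrt (w x)"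
        unfolding distrib_right[symmetric] by (intro mult_right_mono norm_triangle_ineq) (simp add: wF \<open>x \<in> F\<close>)
    qed (simp add: wF)
    also have "\<dots> \<le> L2_set (\<lambda>x. norm (u x) * sqrt (w x)) F + L2_set (\<lambda>x. norm (z x) * sqrt (w x)) F"
      by (rule L2_set_triangle_ineq)
    also have "\<dots> \<le> sqrt ?U + sqrt ?Z"
      unfolding L2 by (intro add_mono partial su sz)
    finally have le: "sqrt (\<Sum>x\<in>F. (norm (u x + z x))\<^sup>2 * w x) \<le> sqrt ?U + sqrt ?Z"
      unfolding L2 .
    have nonneg: "0 \<le> (\<Sum>x\<in>F. (norm (u x + z x))\<^sup>2 * w x)"
      by (intro sum_nonneg) (simp add: wF)
    show "(\<Sum>x\<in>F. (norm (u x + z x))\<^sup>2 * w x) \<le> (sqrt ?U + sqrt ?Z)\<^sup>2"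
      using power_mono[OF le real_sqrt_ge_zero[OF nonneg], of 2] real_sqrt_pow2[OF nonneg] by simp
  qed
  hence "sqrt ?UZ \<le> sqrt ((sqrt ?U + sqrt ?Z)\<^sup>2)"
    by (rule real_sqrt_le_mono)
  also have "\<dots> = sqrt ?U + sqrt ?Z"
    using w by (simp add: infsum_nonneg)
  finally show ?thesis .
qed

lemma
  fixes u z :: "'i \<Rightarrow> 'b::real_normed_vector"
  assumes su: "(\<lambda>x. (norm (u x))\<^sup>2 * w x) summable_on A"
    and sz: "(\<lambda>x. (norm (z x))\<^sup>2 * w x) summable_on A"
    and w: "\<And>x. x \<in> A \<Longrightarrow> 0 \<le> w x"
  shows summable_on_weighted_sq_diff: "(\<lambda>x. (norm (u x - z x))\<^sup>2 * w x) summable_on A"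
    and infsum_weighted_sq_diff_le: "sqrt (infsum (\<lambda>x. (norm (u x - z x))\<^sup>2 * w x) A)
          \<le> sqrt (infsum (\<lambda>x. (norm (u x))\<^sup>2 * w x) A) + sqrt (infsum (\<lambda>x. (norm (z x))\<^sup>2 * w x) A)"
proof -
  have sz': "(\<lambda>x. (norm (- z x))\<^sup>2 * w x) summable_on A"
    using sz by simp
  show "(\<lambda>x. (norm (u x - z x))\<^sup>2 * w x) summable_on A"
    using summable_on_weighted_sq_add[OF su sz' w] by simp
  show "sqrt (infsum (\<lambda>x. (norm (u x - z x))\<^sup>2 * w x) A)
      \<le> sqrt (infsum (\<lambda>x. (norm (u x))\<^sup>2 * w x) A) + sqrt (infsum (\<lambda>x. (norm (z x))\<^sup>2 * w x) A)"
    using infsum_weighted_sq_triangle[OF su sz' w] by simp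
qed

lemma summable_on_geometric_abs_int:
  fixes r :: real
  assumes "0 \<le> r" and "r < 1"
  shows "(\<lambda>n::int. r ^ nat \<bar>n\<bar>) summable_on UNIV"
proof -
  have nat_summable: "(\<lambda>k::nat. r ^ k) summable_on UNIV"
    using summable_on_UNIV_nonneg_real_iff[of "\<lambda>k. r ^ k"] assms summable_geometric[of r] by simp
  have "(\<lambda>n::int. r ^ nat \<bar>n\<bar>) summable_on int ` UNIV"
    using summable_on_reindex[of int UNIV "\<lambda>n::int. r ^ nat \<bar>n\<bar>"] nat_summable by (simp add: o_def)
  moreover have "(\<lambda>n::int. r ^ nat \<bar>n\<bar>) summable_on uminus ` int ` UNIV"
    using summable_on_reindex[of "\<lambda>k::nat. - int k" UNIV "\<lambda>n::int. r ^ nat \<bar>n\<bar>"] nat_summable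
    by (simp add: o_def inj_on_def image_image)
  moreover have "n \<in> int ` UNIV \<union> uminus ` int ` UNIV" for n :: int
  proof (cases "n \<ge> 0")
    case True
    then have "n = int (nat n)" by simp
    then show ?thesis by blast
  next
    case False
    then have "n = - int (nat (- n))" by simp
    then show ?thesis by blast
  qed
  then have "(UNIV :: int set) = int ` UNIV \<union> uminus ` int ` UNIV"
    by blast
  ultimately show ?thesis
    using summable_on_union by metis
qed

lemma countable_pointwise_convergent_subseq:
  fixes G :: "nat \<Rightarrow> 'i \<Rightarrow> 'b::heine_borel"
  assumes "countable I" and bounded: "\<And>i. i \<in> I \<Longrightarrow> bounded (range (\<lambda>j. G j i))"
  shows "\<exists>r. strict_mono r \<and> (\<forall>i\<in>I. convergent (\<lambda>j. G (r j) i))"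
proof (cases "I = {}")
  case True
  then show ?thesis
    using strict_mono_id by blast
next
  case False
  define en where "en = from_nat_into I"
  have en: "range en = I"
    unfolding en_def using False assms(1) by (rule range_from_nat_into)
  interpret subseqs "\<lambda>k s. convergent (\<lambda>j. G (s j) (en k))"
  proof
    fix k and s :: "nat \<Rightarrow> nat"
    have "bounded (range (\<lambda>j. G (s j) (en k)))"
      by (rule bounded_subset[OF bounded]) (use en in auto)
    then obtain l r where "strict_mono r" "((\<lambda>j. G (s j) (en k)) \<circ> r) \<longlonglongrightarrow> l"
      using bounded_imp_convergent_subsequence by blast
    then show "\<exists>r'. strict_mono r' \<and> convergent (\<lambda>j. G ((s \<circ> r') j) (en k))"
      by (auto simp: convergent_def o_def)
  qed
  have "convergent (\<lambda>j. G (diagseq j) (en k))" for k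
  proof -
    have "convergent (\<lambda>j. G ((diagseq \<circ> (+) (Suc k)) j) (en k))"
      by (rule diagseq_holds) (auto dest: convergent_subseq_convergent simp: o_def)
    then show ?thesis
      using convergent_ignore_initial_segment[of "\<lambda>j. G (diagseq j) (en k)" "Suc k"]
      by (simp add: o_def add.commute)
  qed
  then show ?thesis
    using subseq_diagseq en by blast
qed

lemma finite_weighted_sq_Cauchy:
  fixes g :: "nat \<Rightarrow> 'i \<Rightarrow> 'b::real_normed_vector"
  assumes "finite K" and w: "\<And>i. i \<in> K \<Longrightarrow> 0 \<le> w i"
    and convergent: "\<And>i. i \<in> K \<Longrightarrow> convergent (\<lambda>j. g j i)" and "\<eta> > 0"
  shows "\<exists>N. \<forall>j\<ge>N. \<forall>k\<ge>N. (\<Sum>i\<in>K. (norm (g j i - g k i))\<^sup>2 * w i) < \<eta>"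
proof -
  define W where "W = (\<Sum>i\<in>K. w i)"
  have "W \<ge> 0"
    unfolding W_def using w by (auto intro: sum_nonneg)
  define \<delta> where "\<delta> = sqrt (\<eta> / (4 * (W + 1)))"
  have "\<delta> > 0"
    unfolding \<delta>_def using \<open>\<eta> > 0\<close> \<open>W \<ge> 0\<close> by simp
  have \<delta>W: "4 * \<delta>\<^sup>2 * W < \<eta>"
    unfolding \<delta>_def using \<open>\<eta> > 0\<close> \<open>W \<ge> 0\<close> by (simp add: field_simps)
  obtain L where L: "\<And>i. i \<in> K \<Longrightarrow> (\<lambda>j. g j i) \<longlonglongrightarrow> L i"
    using convergent unfolding convergent_def by metis
  have "\<forall>\<^sub>F j in sequentially. \<forall>i\<in>K. dist (g j i) (L i) < \<delta>"
    using \<open>finite K\<close> \<open>\<delta> > 0\<close> by (intro eventually_ball_finite ballI tendstoD[OF L]) auto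
  then obtain N where N: "\<And>j i. j \<ge> N \<Longrightarrow> i \<in> K \<Longrightarrow> dist (g j i) (L i) < \<delta>"
    unfolding eventually_sequentially by blast
  have "(\<Sum>i\<in>K. (norm (g j i - g k i))\<^sup>2 * w i) < \<eta>" if "j \<ge> N" "k \<ge> N" for j k
  proof -
    have "(norm (g j i - g k i))\<^sup>2 * w i \<le> 4 * \<delta>\<^sup>2 * w i" if "i \<in> K" for i
    proof -
      have "dist (g j i) (g k i) < 2 * \<delta>"
        using N[OF \<open>j \<ge> N\<close> that] N[OF \<open>k \<ge> N\<close> that]
        by (intro dist_triangle_lt[of _ "L i"]) simp
      then have "(norm (g j i - g k i))\<^sup>2 \<le> (2 * \<delta>)\<^sup>2"
        by (intro power_mono) (auto simp: dist_norm)
      then show ?thesis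
        using w that by (auto simp: power_mult_distrib intro: mult_right_mono)
    qed
    then have "(\<Sum>i\<in>K. (norm (g j i - g k i))\<^sup>2 * w i) \<le> 4 * \<delta>\<^sup>2 * W"
      by (simp add: W_def sum_distrib_left sum_mono)
    with \<delta>W show ?thesis
      by linarith
  qed
  then show ?thesis
    by blast
qed

lemma weighted_sq_Cauchy_if_tight:
  fixes g :: "nat \<Rightarrow> 'i \<Rightarrow> 'b::real_normed_vector"
  assumes w: "\<And>i. i \<in> I \<Longrightarrow> 0 \<le> w i"
    and summable: "\<And>j. (\<lambda>i. (norm (g j i))\<^sup>2 * w i) summable_on I"
    and convergent: "\<And>i. i \<in> I \<Longrightarrow> convergent (\<lambda>j. g j i)"
    and tight: "\<And>\<eta>. \<eta> > 0 \<Longrightarrow>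
      \<exists>K. finite K \<and> K \<subseteq> I \<and> (\<forall>j. infsum (\<lambda>i. (norm (g j i))\<^sup>2 * w i) (I - K) \<le> \<eta>)"
    and "\<epsilon> > 0"
  shows "\<exists>N. \<forall>j\<ge>N. \<forall>k\<ge>N. infsum (\<lambda>i. (norm (g j i - g k i))\<^sup>2 * w i) I < \<epsilon>"
proof -
  obtain K where K: "finite K" "K \<subseteq> I"
    and tail: "\<And>j. infsum (\<lambda>i. (norm (g j i))\<^sup>2 * w i) (I - K) \<le> \<epsilon> / 16"
    using tight[of "\<epsilon> / 16"] \<open>\<epsilon> > 0\<close> by auto
  have "\<exists>N. \<forall>j\<ge>N. \<forall>k\<ge>N. (\<Sum>i\<in>K. (norm (g j i - g k i))\<^sup>2 * w i) < \<epsilon> / 2"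
    using K \<open>\<epsilon> > 0\<close> by (intro finite_weighted_sq_Cauchy w convergent) auto
  then obtain N where N: "\<And>j k. j \<ge> N \<Longrightarrow> k \<ge> N \<Longrightarrow> (\<Sum>i\<in>K. (norm (g j i - g k i))\<^sup>2 * w i) < \<epsilon> / 2"
    by blast
  have "infsum (\<lambda>i. (norm (g j i - g k i))\<^sup>2 * w i) I < \<epsilon>" if "j \<ge> N" "k \<ge> N" for j k
  proof -
    define sq where "sq i = (norm (g j i - g k i))\<^sup>2 * w i" for i
    have "sq summable_on I"
      unfolding sq_def by (rule summable_on_weighted_sq_diff[OF summable summable w])
    then have split: "infsum sq I = infsum sq K + infsum sq (I - K)"
      using K infsum_Un_disjoint[of sq K "I - K"] by (simp add: Un_absorb1 summable_on_subset)
    have "sqrt (infsum sq (I - K)) \<le> sqrt (\<epsilon> / 16) + sqrt (\<epsilon> / 16)"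
      unfolding sq_def using summable_on_subset[OF summable] w
      by (intro order_trans[OF infsum_weighted_sq_diff_le] add_mono real_sqrt_le_mono tail) auto
    also have "\<dots> = sqrt (\<epsilon> / 4)"
      by (simp add: real_sqrt_divide)
    finally have "infsum sq (I - K) \<le> \<epsilon> / 4"
      by simp
    moreover have "infsum sq K < \<epsilon> / 2"
      using N[OF that] K(1) by (simp add: sq_def)
    ultimately show ?thesis
      using split \<open>\<epsilon> > 0\<close> unfolding sq_def by linarith
  qed
  then show ?thesis
    by blast
qed

lemma weighted_sq_Cauchy_subseq:
  fixes g :: "nat \<Rightarrow> 'i \<Rightarrow> 'b::{real_normed_vector, heine_borel}"
  assumes "countable I"
    and w: "\<And>i. i \<in> I \<Longrightarrow> 0 \<le> w i"
    and summable: "\<And>j. (\<lambda>i. (norm (g j i))\<^sup>2 * w i) summable_on I"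
    and bounded: "\<And>i. i \<in> I \<Longrightarrow> bounded (range (\<lambda>j. g j i))"
    and tight: "\<And>\<eta>. \<eta> > 0 \<Longrightarrow>
      \<exists>K. finite K \<and> K \<subseteq> I \<and> (\<forall>j. infsum (\<lambda>i. (norm (g j i))\<^sup>2 * w i) (I - K) \<le> \<eta>)"
  shows "\<exists>r::nat \<Rightarrow> nat. strict_mono r \<and>
    (\<forall>\<epsilon>>0. \<exists>N. \<forall>j\<ge>N. \<forall>k\<ge>N. infsum (\<lambda>i. (norm (g (r j) i - g (r k) i))\<^sup>2 * w i) I < \<epsilon>)"
proof -
  have "\<exists>r. strict_mono r \<and> (\<forall>i\<in>I. convergent (\<lambda>j. g (r j) i))"
    using assms(1) bounded by (rule countable_pointwise_convergent_subseq)
  then obtain r :: "nat \<Rightarrow> nat" where r: "strict_mono r" "\<forall>i\<in>I. convergent (\<lambda>j. g (r j) i)"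
    by blast
  have Cauchy: "\<exists>N. \<forall>j\<ge>N. \<forall>k\<ge>N. infsum (\<lambda>i. (norm (g (r j) i - g (r k) i))\<^sup>2 * w i) I < \<epsilon>"
    if "\<epsilon> > 0" for \<epsilon>
  proof (rule weighted_sq_Cauchy_if_tight[OF w summable bspec[OF r(2)] _ that])
    fix \<eta> :: real assume "\<eta> > 0"
    then obtain K where "finite K" "K \<subseteq> I" "\<forall>j. infsum (\<lambda>i. (norm (g j i))\<^sup>2 * w i) (I - K) \<le> \<eta>"
      using tight by blast
    then show "\<exists>K. finite K \<and> K \<subseteq> I \<and> (\<forall>j. infsum (\<lambda>i. (norm (g (r j) i))\<^sup>2 * w i) (I - K) \<le> \<eta>)"
      by auto
  qed
  show ?thesis
    using r(1) Cauchy by (intro exI[of _ r]) simp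
qed

lemma geometric_telescoping_le:
  fixes s :: "int \<Rightarrow> real"
  assumes "0 < r" "r < 1" "0 \<le> c"
    and step: "\<And>m. s m \<le> c * r powi m + s (m + 1)"
    and vanishing: "\<And>\<eta>. \<eta> > 0 \<Longrightarrow> \<exists>N. \<forall>m\<ge>N. s m \<le> \<eta>"
  shows "s n \<le> c * r powi n / (1 - r)"
proof -
  define h where "h m = s m - c * r powi m / (1 - r)" for m
  have h_mono: "h m \<le> h (m + 1)" for m
  proof -
    have "r powi (m + 1) = r powi m * r"
      by (rule power_int_add_1) (use \<open>0 < r\<close> in simp)
    then have "c * r powi m / (1 - r) = c * r powi m + c * r powi (m + 1) / (1 - r)"
      using \<open>r < 1\<close> by (simp add: field_simps)
    then show ?thesis
      unfolding h_def using step[of m] by linarith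
  qed
  have h_le: "h n \<le> h (n + int j)" for j
  proof (induction j)
    case (Suc j)
    have "n + int (Suc j) = n + int j + 1"
      by simp
    then show ?case
      using Suc.IH h_mono[of "n + int j"] by (metis order_trans)
  qed simp
  have "h n \<le> \<eta>" if \<eta>: "\<eta> > 0" for \<eta>
  proof -
    obtain N where N: "\<forall>m\<ge>N. s m \<le> \<eta>"
      using vanishing[OF \<eta>] by blast
    have "h n \<le> h (n + int (nat (N - n)))"
      by (rule h_le)
    also have "\<dots> \<le> s (n + int (nat (N - n)))"
      unfolding h_def using assms(1-3) by (simp add: divide_nonneg_pos)
    also have "\<dots> \<le> \<eta>"
      using N by simp
    finally show ?thesis .
  qed
  then show ?thesis
    using field_le_epsilon[of "h n" 0] unfolding h_def by simp
qed

lemma weighted_sq_le_of_norm_le: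
  fixes u z :: "'b::real_normed_vector"
  assumes "norm u \<le> K * norm z" and "0 \<le> K" and "0 \<le> w"
  shows "(norm u)\<^sup>2 * w \<le> K\<^sup>2 * ((norm z)\<^sup>2 * w)"
proof -
  have "(norm u)\<^sup>2 \<le> (K * norm z)\<^sup>2"
    using assms(1) by (intro power_mono) auto
  from mult_right_mono[OF this assms(3)] show ?thesis
    by (simp add: power_mult_distrib mult.assoc)
qed

section \<open>Nonarchimedean absolute values and the sets \<open>X\<^sub>n\<close>\<close>

locale nonarchimedean_field =
  fixes v :: "'a::field \<Rightarrow> real"
  assumes nonarch_abs: "nonarch_abs v"
begin

lemma v_nonneg: "v x \<ge> 0"
  and v_eq_0_iff [simp]: "v x = 0 \<longleftrightarrow> x = 0"
  and v_mult: "v (x * y) = v x * v y"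
  and v_add_le: "v (x + y) \<le> max (v x) (v y)"
  using nonarch_abs unfolding nonarch_abs_def by blast+

lemma v_zero [simp]: "v 0 = 0"
  by simp

lemma v_one [simp]: "v 1 = 1"
  using v_mult[of 1 1] v_eq_0_iff[of 1] by simp

lemma v_minus [simp]: "v (- x) = v x"
proof -
  have "(v (-1) - 1) * (v (-1) + 1) = 0"
    using v_mult[of "-1" "-1"] by (simp add: algebra_simps)
  moreover have "v (-1) + 1 \<noteq> 0"
    using v_nonneg[of "-1"] by linarith
  ultimately show ?thesis
    using v_mult[of "-1" x] by simp
qed

lemma v_diff_le: "v (x - y) \<le> max (v x) (v y)"
  using v_add_le[of x "- y"] by simp

lemma v_add_eq_left:
  assumes "v y < v x"
  shows "v (x + y) = v x"
proof -
  have "v x \<le> max (v (x + y)) (v (- y))"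
    using v_add_le[of "x + y" "- y"] by simp
  then show ?thesis
    using v_add_le[of x y] assms by auto
qed

lemma v_inverse: "v (inverse x) = inverse (v x)"
  using v_mult[of "inverse x" x] by (cases "x = 0") (auto simp: field_simps)

lemma v_power: "v (x ^ n) = v x ^ n"
  by (induction n) (auto simp: v_mult)

lemma v_power_int: "v (x powi k) = v x powi k"
  by (simp add: power_int_def v_power v_inverse)

lemma v_sum_le:
  assumes "finite A" and "0 \<le> M" and "\<And>k. k \<in> A \<Longrightarrow> v (g k) \<le> M"
  shows "v (sum g A) \<le> M"
  using assms
proof (induction A rule: finite_induct)
  case (insert x F)
  then have "max (v (g x)) (v (sum g F)) \<le> M"
    by simp
  then show ?case
    using insert.hyps by (simp add: order_trans[OF v_add_le])
qed simp

end

locale local_field =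
  fixes v :: "'a::field_char_0 \<Rightarrow> real" and p e f :: nat and \<pi> :: 'a and S :: "'a set"
  assumes local_field_data: "local_field_data v p e f \<pi> S"
begin

sublocale nonarchimedean_field v
  using local_field_data by unfold_locales (simp add: local_field_data_def)

abbreviation X :: "int \<Rightarrow> 'a set" where "X \<equiv> Xset \<pi> S"

abbreviation q :: real where "q \<equiv> v \<pi>"

lemma prime_p: "prime p"
  and e_ge_1: "e \<ge> 1"
  and q_eq: "q = real p powr (- 1 / real e)"
  and finite_S: "finite S"
  and card_S: "card S = p ^ f"
  and zero_in_S: "0 \<in> S"
  and v_S_le_1: "s \<in> S \<Longrightarrow> v s \<le> 1"
  and S_representatives: "v r \<le> 1 \<Longrightarrow> \<exists>!s. s \<in> S \<and> v (r - s) < 1"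
  using local_field_data unfolding local_field_data_def by auto

lemma p_ge_2: "p \<ge> 2"
  using prime_p prime_ge_2_nat by blast

lemma q_pos: "q > 0"
  using q_eq p_ge_2 by simp

lemma q_less_1: "q < 1"
  using q_eq p_ge_2 e_ge_1 by (simp add: powr_less_one)

lemma pi_nonzero: "\<pi> \<noteq> 0"
  using q_pos by auto

lemma q_powi_pos: "q powi n > 0"
  using q_pos by simp

lemma q_powi_strict_antimono: "m < n \<Longrightarrow> q powi n < q powi m"
  by (rule power_int_strict_decreasing) (use q_pos q_less_1 in auto)

lemma q_powi_antimono: "m \<le> n \<Longrightarrow> q powi n \<le> q powi m"
  using q_powi_strict_antimono[of m n] by (cases "m = n") auto

lemma q_powi_scale: "q powi n * real p powr (real_of_int n / real e) = 1"
proof -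
  have "q powi n = real p powr (- real_of_int n / real e)"
    using q_pos powr_real_of_int'[of q n] by (simp add: q_eq powr_powr)
  then show ?thesis
    using p_ge_2 by (simp add: powr_add[symmetric])
qed

lemma v_S_diff:
  assumes "s \<in> S" "s' \<in> S" "s \<noteq> s'"
  shows "v (s - s') = 1"
proof -
  have "v (s - s') \<le> 1"
    using v_diff_le[of s s'] v_S_le_1[OF assms(1)] v_S_le_1[OF assms(2)] by simp
  moreover have "\<not> v (s - s') < 1"
  proof
    assume "v (s - s') < 1"
    moreover have "v (s - s) < 1" by simp
    ultimately show False
      using S_representatives[OF v_S_le_1[OF assms(1)]] assms by blast
  qed
  ultimately show ?thesis by simp
qed

lemma v_S: "s \<in> S \<Longrightarrow> s = 0 \<or> v s = 1"
  using v_S_diff[of s 0] zero_in_S by auto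

lemma v_digit_expansion_le:
  assumes "\<And>k. v (c k) \<le> 1" and "finite A" and "\<And>k. k \<in> A \<Longrightarrow> m \<le> k"
  shows "v (\<Sum>k\<in>A. c k * \<pi> powi k) \<le> q powi m"
proof (rule v_sum_le)
  fix k assume "k \<in> A"
  then have "v (c k) * q powi k \<le> 1 * q powi m"
    using assms q_powi_antimono[of m k] by (intro mult_mono) (auto simp: v_nonneg less_imp_le[OF q_powi_pos])
  then show "v (c k * \<pi> powi k) \<le> q powi m"
    by (simp add: v_mult v_power_int)
qed (use assms q_powi_pos in \<open>auto intro: less_imp_le\<close>)

text \<open>An expansion whose digits are \<open>0\<close> or units has the absolute value of its lowest nonzero term.\<close>

lemma digit_expansion_eq_0:
  assumes digits: "\<And>k. D k = 0 \<or> v (D k) = 1"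
    and small: "v (\<Sum>k\<in>{m..<n}. D k * \<pi> powi k) \<le> q powi n"
  shows "(\<Sum>k\<in>{m..<n}. D k * \<pi> powi k) = 0"
proof (cases "m \<le> n")
  case True
  then show ?thesis
    using small
  proof (induction m rule: int_le_induct)
    case (step m)
    have split: "(\<Sum>k\<in>{m - 1..<n}. D k * \<pi> powi k) = D (m - 1) * \<pi> powi (m - 1) + (\<Sum>k\<in>{m..<n}. D k * \<pi> powi k)"
    proof -
      have "{m - 1..<n} = insert (m - 1) {m..<n}"
        using step.hyps by auto
      then show ?thesis
        by simp
    qed
    have "v (D k) \<le> 1" for k
      using digits[of k] by auto
    then have tail: "v (\<Sum>k\<in>{m..<n}. D k * \<pi> powi k) < q powi (m - 1)"
      using v_digit_expansion_le[of D "{m..<n}" m] q_powi_strict_antimono[of "m - 1" m] by force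
    have "D (m - 1) = 0"
    proof (rule ccontr)
      assume "D (m - 1) \<noteq> 0"
      then have lead: "v (D (m - 1) * \<pi> powi (m - 1)) = q powi (m - 1)"
        using digits[of "m - 1"] by (simp add: v_mult v_power_int)
      then have "q powi (m - 1) \<le> q powi n"
        using step.prems tail v_add_eq_left[of "\<Sum>k\<in>{m..<n}. D k * \<pi> powi k"] by (simp add: split)
      then show False
        using q_powi_strict_antimono[of "m - 1" n] step.hyps by simp
    qed
    then show ?case
      using step split by simp
  qed simp
qed simp

lemma Xset_expansion:
  assumes "x \<in> X n"
  obtains k0 c where "\<And>k. c k \<in> S" and "\<And>m. m \<le> k0 \<Longrightarrow> x = (\<Sum>k\<in>{m..<n}. c k * \<pi> powi k)"
proof -
  obtain k0 c where c: "\<forall>k. c k \<in> S" and x: "x = (\<Sum>k\<in>{k0..<n}. c k * \<pi> powi k)"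
    using assms unfolding Xset_def by blast
  define c' where "c' k = (if k0 \<le> k then c k else 0)" for k
  have "x = (\<Sum>k\<in>{m..<n}. c' k * \<pi> powi k)" if "m \<le> k0" for m
  proof -
    have "(\<Sum>k\<in>{m..<n}. c' k * \<pi> powi k) = (\<Sum>k\<in>{m..<n}. if k0 \<le> k then c k * \<pi> powi k else 0)"
      by (rule sum.cong) (auto simp: c'_def)
    also have "\<dots> = (\<Sum>k\<in>{k\<in>{m..<n}. k0 \<le> k}. c k * \<pi> powi k)"
      by (rule sum.inter_filter[symmetric]) auto
    also have "{k\<in>{m..<n}. k0 \<le> k} = {k0..<n}"
      using that by auto
    finally show ?thesis
      using x by simp
  qed
  moreover have "c' k \<in> S" for k
    using c zero_in_S by (simp add: c'_def)
  ultimately show ?thesis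
    using that by blast
qed

lemma expansion_in_Xset:
  assumes "\<And>k. c k \<in> S"
  shows "(\<Sum>k\<in>{m..<n}. c k * \<pi> powi k) \<in> X n"
  unfolding Xset_def using assms by blast

lemma zero_in_Xset: "0 \<in> X n"
  using expansion_in_Xset[of "\<lambda>_. 0" n n] zero_in_S by simp

text \<open>Two points of \<open>X\<^sub>n\<close> differ by an expansion with digits \<open>s - s'\<close>, each \<open>0\<close> or a unit.\<close>

lemma Xset_eq_if_close:
  assumes "x \<in> X n" "x' \<in> X n" "v (x - x') \<le> q powi n"
  shows "x = x'"
proof -
  obtain k0 c where c: "\<And>k. c k \<in> S" "\<And>m. m \<le> k0 \<Longrightarrow> x = (\<Sum>k\<in>{m..<n}. c k * \<pi> powi k)"
    using Xset_expansion[OF assms(1)] by blast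
  obtain k0' c' where c': "\<And>k. c' k \<in> S" "\<And>m. m \<le> k0' \<Longrightarrow> x' = (\<Sum>k\<in>{m..<n}. c' k * \<pi> powi k)"
    using Xset_expansion[OF assms(2)] by blast
  define m where "m = min k0 k0'"
  have "x - x' = (\<Sum>k\<in>{m..<n}. (c k - c' k) * \<pi> powi k)"
    using c(2)[of m] c'(2)[of m] by (simp add: m_def sum_subtractf left_diff_distrib)
  moreover have "c k - c' k = 0 \<or> v (c k - c' k) = 1" for k
    using v_S_diff[OF c(1) c'(1)] by auto
  ultimately have "x - x' = 0"
    using digit_expansion_eq_0[of "\<lambda>k. c k - c' k"] assms(3) by simp
  then show ?thesis
    by simp
qed

lemma v_Xset_gt:
  assumes "x \<in> X n" "x \<noteq> 0"
  shows "q powi n < v x"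
  using Xset_eq_if_close[OF assms(1) zero_in_Xset] assms(2) by force

lemma inj_on_Xset_children: "inj_on (\<lambda>(x, s). x + s * \<pi> powi n) (X n \<times> S)"
proof (rule inj_onI, clarify)
  fix x s x' s'
  assume x: "x \<in> X n" "x' \<in> X n" and s: "s \<in> S" "s' \<in> S"
    and eq: "x + s * \<pi> powi n = x' + s' * \<pi> powi n"
  have diff: "x - x' = (s' - s) * \<pi> powi n"
    using eq by (simp add: algebra_simps)
  have "s = s'"
  proof (rule ccontr)
    assume "s \<noteq> s'"
    then have "v (x - x') = q powi n"
      using v_S_diff[OF s(2) s(1)] diff by (simp add: v_mult v_power_int)
    then have "x = x'"
      using Xset_eq_if_close[OF x] by simp
    then show False
      using diff \<open>s \<noteq> s'\<close> pi_nonzero by simp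
  qed
  then show "x = x' \<and> s = s'"
    using eq by simp
qed

lemma Xset_children: "(\<lambda>(x, s). x + s * \<pi> powi n) ` (X n \<times> S) = X (n + 1)"
proof safe
  fix x s assume x: "x \<in> X n" and s: "s \<in> S"
  obtain k0 c where c: "\<And>k. c k \<in> S" "\<And>m. m \<le> k0 \<Longrightarrow> x = (\<Sum>k\<in>{m..<n}. c k * \<pi> powi k)"
    using Xset_expansion[OF x] by blast
  define m where "m = min k0 n"
  have "{m..<n + 1} = insert n {m..<n}"
    unfolding m_def by auto
  then have "(\<Sum>k\<in>{m..<n + 1}. (c(n := s)) k * \<pi> powi k) = x + s * \<pi> powi n"
    using c(2)[of m] by (simp add: m_def add.commute)
  moreover have "(c(n := s)) k \<in> S" for k
    using c(1) s by simp
  ultimately show "x + s * \<pi> powi n \<in> X (n + 1)"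
    using expansion_in_Xset by metis
next
  fix y assume y: "y \<in> X (n + 1)"
  obtain k0 c where c: "\<And>k. c k \<in> S" "\<And>m. m \<le> k0 \<Longrightarrow> y = (\<Sum>k\<in>{m..<n + 1}. c k * \<pi> powi k)"
    using Xset_expansion[OF y] by blast
  define m where "m = min k0 n"
  have "{m..<n + 1} = insert n {m..<n}"
    unfolding m_def by auto
  then have "y = (\<Sum>k\<in>{m..<n}. c k * \<pi> powi k) + c n * \<pi> powi n"
    using c(2)[of m] by (simp add: m_def add.commute)
  moreover have "(\<Sum>k\<in>{m..<n}. c k * \<pi> powi k) \<in> X n"
    using expansion_in_Xset c(1) by blast
  ultimately show "y \<in> (\<lambda>(x, s). x + s * \<pi> powi n) ` (X n \<times> S)"
    using c(1) by (auto intro!: image_eqI[of _ _ "((\<Sum>k\<in>{m..<n}. c k * \<pi> powi k), c n)"])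
qed

lemma Xset_children_bij: "bij_betw (\<lambda>(x, s). x + s * \<pi> powi n) (X n \<times> S) (X (n + 1))"
  using inj_on_Xset_children Xset_children by (rule bij_betw_imageI)

lemma Xset_bounded_expansion:
  assumes "x \<in> X n" and "v x \<le> q powi M" and "M \<le> n"
  shows "x \<in> (\<lambda>c. \<Sum>k\<in>{M..<n}. c k * \<pi> powi k) ` PiE {M..<n} (\<lambda>_. S)"
proof -
  let ?expansion = "\<lambda>c. \<Sum>k\<in>{M..<n}. c k * \<pi> powi k"
  obtain k0 c where c: "\<And>k. c k \<in> S" "\<And>m. m \<le> k0 \<Longrightarrow> x = (\<Sum>k\<in>{m..<n}. c k * \<pi> powi k)"
    using Xset_expansion[OF assms(1)] by blast
  define m where "m = min k0 M"
  have "{m..<n} = {m..<M} \<union> {M..<n}"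
    using assms(3) m_def by auto
  then have split: "x = (\<Sum>k\<in>{m..<M}. c k * \<pi> powi k) + ?expansion c"
    using c(2)[of m] by (simp add: m_def sum.union_disjoint)
  have "v (c k) \<le> 1" for k
    using c(1) v_S_le_1 by blast
  then have "v (?expansion c) \<le> q powi M"
    by (intro v_digit_expansion_le) auto
  then have "v (\<Sum>k\<in>{m..<M}. c k * \<pi> powi k) \<le> q powi M"
    using v_diff_le[of x "?expansion c"] assms(2) split by (simp add: algebra_simps)
  moreover have "c k = 0 \<or> v (c k) = 1" for k
    using v_S c(1) by blast
  ultimately have "x = ?expansion c"
    using digit_expansion_eq_0[of c m M] split by simp
  also have "\<dots> = ?expansion (restrict c {M..<n})"
    by (rule sum.cong) auto
  finally show ?thesis
    using c(1) by (intro rev_image_eqI[of "restrict c {M..<n}"]) auto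
qed

lemma finite_Xset_bounded: "finite {x \<in> X n. v x \<le> R}"
proof -
  have "1 < inverse q"
    using q_pos q_less_1 by (simp add: one_less_inverse)
  then obtain k where "R < inverse q ^ k"
    using real_arch_pow by blast
  define M where "M = min n (- int k)"
  have "inverse q ^ k = q powi (- int k)"
    by (simp add: power_int_minus power_inverse)
  then have "R \<le> q powi M"
    using \<open>R < inverse q ^ k\<close> q_powi_antimono[of M "- int k"] by (simp add: M_def)
  then have "{x \<in> X n. v x \<le> R} \<subseteq> (\<lambda>c. \<Sum>k\<in>{M..<n}. c k * \<pi> powi k) ` PiE {M..<n} (\<lambda>_. S)"
    using Xset_bounded_expansion[of _ n M] by (auto simp: M_def)
  moreover have "finite ((\<lambda>c. \<Sum>k\<in>{M..<n}. c k * \<pi> powi k) ` PiE {M..<n} (\<lambda>_. S))"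
    by (intro finite_imageI finite_PiE) (auto simp: finite_S)
  ultimately show ?thesis
    by (rule finite_subset)
qed

lemma countable_Xset: "countable (X n)"
proof -
  let ?expansion = "\<lambda>m c. \<Sum>k\<in>{m..<n}. c k * \<pi> powi k"
  have "X n \<subseteq> (\<Union>m. ?expansion m ` PiE {m..<n} (\<lambda>_. S))"
  proof
    fix x assume "x \<in> X n"
    then obtain m c where c: "\<forall>k. c k \<in> S" and x: "x = ?expansion m c"
      unfolding Xset_def by auto
    have "?expansion m c = ?expansion m (restrict c {m..<n})"
      by (rule sum.cong) auto
    moreover have "restrict c {m..<n} \<in> PiE {m..<n} (\<lambda>_. S)"
      using c by auto
    ultimately show "x \<in> (\<Union>m. ?expansion m ` PiE {m..<n} (\<lambda>_. S))"
      using x by blast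
  qed
  moreover have "countable (\<Union>m. ?expansion m ` PiE {m..<n} (\<lambda>_. S))"
  proof (rule countable_UN)
    show "countable (?expansion m ` PiE {m..<n} (\<lambda>_. S))" for m
      by (intro countable_image countable_finite finite_PiE) (auto simp: finite_S)
  qed simp
  ultimately show ?thesis
    by (rule countable_subset)
qed

section \<open>The a priori estimate for \<open>D\<close>\<close>

lemma wt_pos: "wt p f n > 0"
  unfolding wt_def using p_ge_2 by simp

lemma wt_children: "wt p f n = real (p ^ f) * wt p f (n + 1)"
proof -
  have "real p powr (- (real_of_int n * real f)) = real p powr real f * real p powr (- (real_of_int (n + 1) * real f))"
    by (simp add: powr_add[symmetric] algebra_simps)
  then show ?thesis
    using p_ge_2 by (simp add: wt_def powr_realpow)
qed

definition level_norm2 :: "(int \<Rightarrow> 'a \<Rightarrow> complex) \<Rightarrow> int \<Rightarrow> real" where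
  "level_norm2 \<phi> n = infsum (\<lambda>x. (cmod (\<phi> n x))\<^sup>2 * wt p f n) (X n)"

lemma inH_summable:
  "inH p f \<pi> S \<phi> \<Longrightarrow> (\<lambda>(n, x). (cmod (\<phi> n x))\<^sup>2 * wt p f n) summable_on Sigma UNIV X"
  unfolding inH_def by blast

lemma inH_level_summable:
  "inH p f \<pi> S \<phi> \<Longrightarrow> (\<lambda>x. (cmod (\<phi> n x))\<^sup>2 * wt p f n) summable_on X n"
  using summable_on_SigmaD1[where f="\<lambda>n x. (cmod (\<phi> n x))\<^sup>2 * wt p f n", OF inH_summable] by simp

lemma hnorm2_eq_infsum_level_norm2:
  "inH p f \<pi> S \<phi> \<Longrightarrow> hnorm2 p f \<pi> S \<phi> = infsum (level_norm2 \<phi>) UNIV"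
  unfolding hnorm2_def level_norm2_def
  using infsum_Sigma'_banach[where f="\<lambda>n x. (cmod (\<phi> n x))\<^sup>2 * wt p f n", OF inH_summable] by simp

lemma level_norm2_summable: "inH p f \<pi> S \<phi> \<Longrightarrow> level_norm2 \<phi> summable_on UNIV"
  unfolding level_norm2_def
  using summable_on_Sigma_banach[where f="\<lambda>n x. (cmod (\<phi> n x))\<^sup>2 * wt p f n", OF inH_summable] by simp

lemma level_norm2_nonneg: "level_norm2 \<phi> n \<ge> 0"
  unfolding level_norm2_def by (rule infsum_nonneg) (simp add: wt_pos less_imp_le)

lemma hnorm2_nonneg: "hnorm2 p f \<pi> S \<phi> \<ge> 0"
  unfolding hnorm2_def by (rule infsum_nonneg) (auto simp: wt_pos less_imp_le)

lemma level_norm2_le_hnorm2: "inH p f \<pi> S \<phi> \<Longrightarrow> level_norm2 \<phi> n \<le> hnorm2 p f \<pi> S \<phi>"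
  using le_infsum_single[OF level_norm2_summable, of \<phi> n] level_norm2_nonneg hnorm2_eq_infsum_level_norm2
  by simp

lemma level_norm2_eventually_le:
  assumes "inH p f \<pi> S \<phi>" and "\<eta> > 0"
  shows "\<exists>N. \<forall>m\<ge>N. level_norm2 \<phi> m \<le> \<eta>"
proof -
  obtain F where F: "finite F" "infsum (level_norm2 \<phi>) (UNIV - F) \<le> \<eta>"
    using infsum_tail_small[OF level_norm2_summable[OF assms(1)] assms(2)] by blast
  have "level_norm2 \<phi> m \<le> \<eta>" if "m > Max (insert 0 F)" for m
  proof -
    have "m \<notin> F"
      using that F(1) Max_ge[of "insert 0 F" m] by auto
    then have "level_norm2 \<phi> m \<le> infsum (level_norm2 \<phi>) (UNIV - F)"
      using summable_on_subset[OF level_norm2_summable[OF assms(1)]] level_norm2_nonneg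
      by (intro le_infsum_single) auto
    with F(2) show ?thesis
      by simp
  qed
  then show ?thesis
    by (intro exI[of _ "Max (insert 0 F) + 1"]) simp
qed

lemma children_level_norm2:
  fixes n :: int
  assumes "inH p f \<pi> S \<phi>"
  defines "h \<equiv> \<lambda>x. \<Sum>s\<in>S. (cmod (\<phi> (n + 1) (x + s * \<pi> powi n)))\<^sup>2 * wt p f (n + 1)"
  shows "h summable_on X n" and "infsum h (X n) = level_norm2 \<phi> (n + 1)"
proof -
  define g where "g y = (cmod (\<phi> (n + 1) y))\<^sup>2 * wt p f (n + 1)" for y
  have "(\<lambda>xs. g ((\<lambda>(x, s). x + s * \<pi> powi n) xs)) summable_on X n \<times> S"
    unfolding summable_on_reindex_bij_betw[OF Xset_children_bij]
    unfolding g_def by (rule inH_level_summable[OF assms(1)])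
  moreover have reindex: "(\<lambda>xs. g ((\<lambda>(x, s). x + s * \<pi> powi n) xs)) = (\<lambda>(x, s). g (x + s * \<pi> powi n))"
    by (simp add: fun_eq_iff)
  ultimately have summable: "(\<lambda>(x, s). g (x + s * \<pi> powi n)) summable_on Sigma (X n) (\<lambda>_. S)"
    by simp
  have h: "h = (\<lambda>x. infsum (\<lambda>s. g (x + s * \<pi> powi n)) S)"
    using finite_S by (simp add: h_def g_def fun_eq_iff)
  show "h summable_on X n"
    unfolding h using summable_on_Sigma_banach[OF summable] .
  have "infsum h (X n) = infsum (\<lambda>(x, s). g (x + s * \<pi> powi n)) (X n \<times> S)"
    unfolding h using infsum_Sigma'_banach[OF summable] .
  also have "\<dots> = infsum g (X (n + 1))"
    using infsum_reindex_bij_betw[OF Xset_children_bij, of g n] unfolding reindex .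
  finally show "infsum h (X n) = level_norm2 \<phi> (n + 1)"
    by (simp add: level_norm2_def g_def[abs_def])
qed

lemma average_sq_le_children:
  fixes z :: "'a \<Rightarrow> complex"
  shows "(cmod ((\<Sum>s\<in>S. z s) / of_nat (p ^ f)))\<^sup>2 * wt p f n \<le> (\<Sum>s\<in>S. (cmod (z s))\<^sup>2 * wt p f (n + 1))"
proof -
  have "S \<noteq> {}"
    using zero_in_S by blast
  have "(\<Sum>s\<in>S. z s) / of_nat (p ^ f) = (\<Sum>s\<in>S. z s) /\<^sub>R card S"
    by (simp add: card_S scaleR_conv_of_real field_simps)
  then have "(cmod ((\<Sum>s\<in>S. z s) / of_nat (p ^ f)))\<^sup>2 \<le> (\<Sum>s\<in>S. (cmod (z s))\<^sup>2) / real (p ^ f)"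
    using norm_average_sq_le[OF finite_S \<open>S \<noteq> {}\<close>, of z] by (simp add: card_S)
  from mult_right_mono[OF this less_imp_le[OF wt_pos[of n]]]
  have "(cmod ((\<Sum>s\<in>S. z s) / of_nat (p ^ f)))\<^sup>2 * wt p f n \<le> (\<Sum>s\<in>S. (cmod (z s))\<^sup>2) * wt p f (n + 1)"
    using p_ge_2 by (simp add: wt_children[of n])
  then show ?thesis
    by (simp add: sum_distrib_right)
qed

text \<open>From \<open>D \<phi> = \<psi>\<close>: \<open>\<phi>\<^sub>n = q\<^sup>n \<psi>\<^sub>n + (average of \<phi>\<^sub>n\<^sub>+\<^sub>1 over the children)\<close>, and averaging does not increase
  the level norms.\<close>

lemma level_norm_step:
  assumes "\<phi> \<in> domD p e f \<pi> S"
  shows "sqrt (level_norm2 \<phi> n)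
    \<le> q powi n * sqrt (level_norm2 (Dop p e f \<pi> S \<phi>) n) + sqrt (level_norm2 \<phi> (n + 1))"
proof -
  define \<psi> where "\<psi> = Dop p e f \<pi> S \<phi>"
  have H: "inH p f \<pi> S \<phi>" and H\<psi>: "inH p f \<pi> S \<psi>"
    using assms unfolding domD_def \<psi>_def by auto
  define P where "P = real p powr (real_of_int n / real e)"
  have "P > 0"
    unfolding P_def using p_ge_2 by simp
  define u where "u x = \<psi> n x / complex_of_real P" for x
  define E where "E x = (\<Sum>s\<in>S. \<phi> (n + 1) (x + s * \<pi> powi n)) / of_nat (p ^ f)" for x
  have decompose: "\<phi> n x = u x + E x" if "x \<in> X n" for x
    using that \<open>P > 0\<close> by (simp add: \<psi>_def Dop_def u_def E_def P_def field_simps)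
  have u_sq: "(cmod (u x))\<^sup>2 * wt p f n = (q powi n)\<^sup>2 * ((cmod (\<psi> n x))\<^sup>2 * wt p f n)" for x
  proof -
    have qP: "q powi n * P = 1"
      unfolding P_def by (rule q_powi_scale)
    have "cmod (u x) = cmod (\<psi> n x) / P"
      using \<open>P > 0\<close> by (simp add: u_def norm_divide)
    also have "\<dots> = (q powi n * P) * cmod (\<psi> n x) / P"
      by (simp add: qP)
    also have "\<dots> = q powi n * cmod (\<psi> n x)"
      using \<open>P > 0\<close> by simp
    finally show ?thesis
      by (simp add: power_mult_distrib)
  qed
  have su: "(\<lambda>x. (cmod (u x))\<^sup>2 * wt p f n) summable_on X n"
    unfolding u_sq by (intro summable_on_cmult_right inH_level_summable[OF H\<psi>])
  have E_sq: "(cmod (E x))\<^sup>2 * wt p f n \<le> (\<Sum>s\<in>S. (cmod (\<phi> (n + 1) (x + s * \<pi> powi n)))\<^sup>2 * wt p f (n + 1))"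
    for x
    unfolding E_def by (rule average_sq_le_children)
  have sE: "(\<lambda>x. (cmod (E x))\<^sup>2 * wt p f n) summable_on X n"
    using E_sq wt_pos[of n] by (intro summable_on_comparison_test[OF children_level_norm2(1)[OF H]]) auto
  have "level_norm2 \<phi> n = infsum (\<lambda>x. (cmod (u x + E x))\<^sup>2 * wt p f n) (X n)"
    unfolding level_norm2_def by (rule infsum_cong) (simp add: decompose)
  then have "sqrt (level_norm2 \<phi> n)
      \<le> sqrt (infsum (\<lambda>x. (cmod (u x))\<^sup>2 * wt p f n) (X n)) + sqrt (infsum (\<lambda>x. (cmod (E x))\<^sup>2 * wt p f n) (X n))"
    using infsum_weighted_sq_triangle[OF su sE] wt_pos by (simp add: less_imp_le)
  also have "infsum (\<lambda>x. (cmod (u x))\<^sup>2 * wt p f n) (X n) = (q powi n)\<^sup>2 * level_norm2 \<psi> n"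
    unfolding u_sq level_norm2_def by (rule infsum_cmult_right) (rule inH_level_summable[OF H\<psi>])
  also have "infsum (\<lambda>x. (cmod (E x))\<^sup>2 * wt p f n) (X n) \<le> level_norm2 \<phi> (n + 1)"
    using infsum_mono[OF sE children_level_norm2(1)[OF H] E_sq] children_level_norm2(2)[OF H] by simp
  finally show ?thesis
    using q_powi_pos[of n] by (simp add: \<psi>_def real_sqrt_mult)
qed

lemma level_norm2_le_Dop:
  assumes "\<phi> \<in> domD p e f \<pi> S" and "hnorm2 p f \<pi> S (Dop p e f \<pi> S \<phi>) \<le> B"
  shows "level_norm2 \<phi> n \<le> (q powi n / (1 - q))\<^sup>2 * B"
proof -
  have H: "inH p f \<pi> S \<phi>" and H\<psi>: "inH p f \<pi> S (Dop p e f \<pi> S \<phi>)"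
    using assms(1) unfolding domD_def by auto
  have "B \<ge> 0"
    using assms(2) hnorm2_nonneg order_trans by blast
  have "sqrt (level_norm2 \<phi> n) \<le> sqrt B * q powi n / (1 - q)"
  proof (rule geometric_telescoping_le[OF q_pos q_less_1 real_sqrt_ge_zero[OF \<open>B \<ge> 0\<close>]])
    fix m
    have "sqrt (level_norm2 (Dop p e f \<pi> S \<phi>) m) \<le> sqrt B"
      using level_norm2_le_hnorm2[OF H\<psi>] assms(2) by (auto intro: real_sqrt_le_mono order_trans)
    from mult_left_mono[OF this less_imp_le[OF q_powi_pos[of m]]]
    have "q powi m * sqrt (level_norm2 (Dop p e f \<pi> S \<phi>) m) \<le> sqrt B * q powi m"
      by (simp add: mult.commute)
    then show "sqrt (level_norm2 \<phi> m) \<le> sqrt B * q powi m + sqrt (level_norm2 \<phi> (m + 1))"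
      using level_norm_step[OF assms(1), of m] by linarith
  next
    fix \<eta> :: real assume "\<eta> > 0"
    then obtain N where "\<forall>m\<ge>N. level_norm2 \<phi> m \<le> \<eta>\<^sup>2"
      using level_norm2_eventually_le[OF H, of "\<eta>\<^sup>2"] by auto
    then show "\<exists>N. \<forall>m\<ge>N. sqrt (level_norm2 \<phi> m) \<le> \<eta>"
      using \<open>\<eta> > 0\<close> real_sqrt_le_mono[of _ "\<eta>\<^sup>2"] by force
  qed
  then have "(sqrt (level_norm2 \<phi> n))\<^sup>2 \<le> (sqrt B * q powi n / (1 - q))\<^sup>2"
    by (rule power_mono) (simp add: level_norm2_nonneg)
  then show ?thesis
    using level_norm2_nonneg[of \<phi> n] \<open>B \<ge> 0\<close> by (simp add: power_mult_distrib power_divide mult.commute)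
qed

end

section \<open>Multiplication by a decaying function\<close>

locale decaying_multiplier = local_field v p e f \<pi> S
  for v :: "'a::field_char_0 \<Rightarrow> real" and p e f \<pi> S +
  fixes a :: "'a \<Rightarrow> complex" and \<alpha> C :: real
  assumes alpha_gt_1: "\<alpha> > 1" and a_bound: "\<And>x. cmod (a x) \<le> C / (1 + v x powr \<alpha>)"
begin

lemma C_nonneg: "C \<ge> 0"
proof -
  have "cmod (a 0) \<le> C"
    using a_bound[of 0] by simp
  then show ?thesis
    by (rule order_trans[OF norm_ge_zero])
qed

lemma a_bound_beyond:
  assumes "0 \<le> t" and "t \<le> v y"
  shows "cmod (a y) \<le> C / (1 + t powr \<alpha>)"
proof -
  have "t powr \<alpha> \<le> v y powr \<alpha>"
    using assms alpha_gt_1 by (intro powr_mono2) auto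
  moreover have "0 < 1 + t powr \<alpha>" "0 < 1 + v y powr \<alpha>"
    by (simp_all add: add_pos_nonneg)
  ultimately have "C / (1 + v y powr \<alpha>) \<le> C / (1 + t powr \<alpha>)"
    using C_nonneg by (intro divide_left_mono mult_pos_pos) auto
  then show ?thesis
    using a_bound[of y] by linarith
qed

text \<open>Nonzero points of \<open>X\<^sub>n\<close> have absolute value \<open>> q\<^sup>n\<close>, and \<open>\<rho>(a)\<close> evaluates \<open>a\<close> at \<open>\<pi>\<^sup>n\<close> on the point \<open>0\<close>:
  on level \<open>n\<close> it is a multiplication by a function bounded by \<open>a_level_bound n\<close>.\<close>

definition a_level_bound :: "int \<Rightarrow> real" where
  "a_level_bound n = C / (1 + (q powi n) powr \<alpha>)"

lemma a_level_bound_nonneg: "a_level_bound n \<ge> 0"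
  unfolding a_level_bound_def using C_nonneg by simp

lemma a_level_bound_le_C: "a_level_bound n \<le> C"
  unfolding a_level_bound_def using C_nonneg divide_left_mono[of 1 "1 + (q powi n) powr \<alpha>" C]
  by (simp add: add_pos_nonneg)

lemma a_level_bound_le_decay: "a_level_bound n \<le> C / (q powi n) powr \<alpha>"
proof -
  have "0 < (q powi n) powr \<alpha>" "0 < 1 + (q powi n) powr \<alpha>"
    using q_powi_pos[of n] pi_nonzero by (simp_all add: add_pos_nonneg)
  then show ?thesis
    unfolding a_level_bound_def using C_nonneg by (intro divide_left_mono mult_pos_pos) auto
qed

lemma rho_le_level_bound:
  assumes "x \<in> X n"
  shows "cmod (rho \<pi> S a \<phi> n x) \<le> a_level_bound n * cmod (\<phi> n x)"
proof (cases "x = 0")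
  case True
  have "cmod (a (\<pi> powi n)) \<le> a_level_bound n"
    unfolding a_level_bound_def
    by (rule a_bound_beyond) (simp_all add: v_power_int less_imp_le[OF q_powi_pos])
  moreover have "rho \<pi> S a \<phi> n x = a (\<pi> powi n) * \<phi> n x"
    using assms True by (simp add: rho_def)
  ultimately show ?thesis
    by (simp add: norm_mult mult_right_mono)
next
  case False
  have "cmod (a x) \<le> a_level_bound n"
    unfolding a_level_bound_def using v_Xset_gt[OF assms False] q_powi_pos[of n]
    by (intro a_bound_beyond) auto
  moreover have "rho \<pi> S a \<phi> n x = a x * \<phi> n x"
    using assms False by (simp add: rho_def)
  ultimately show ?thesis
    by (simp add: norm_mult mult_right_mono)
qed

lemma rho_le_beyond:
  assumes "x \<in> X n" and "0 \<le> R" and "R < v x"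
  shows "cmod (rho \<pi> S a \<phi> n x) \<le> C / (1 + R powr \<alpha>) * cmod (\<phi> n x)"
proof -
  have "x \<noteq> 0"
    using assms by auto
  then have "rho \<pi> S a \<phi> n x = a x * \<phi> n x"
    using assms(1) by (simp add: rho_def)
  moreover have "cmod (a x) \<le> C / (1 + R powr \<alpha>)"
    using assms by (intro a_bound_beyond) auto
  then have "cmod (a x) * cmod (\<phi> n x) \<le> C / (1 + R powr \<alpha>) * cmod (\<phi> n x)"
    by (rule mult_right_mono) simp
  ultimately show ?thesis
    by (simp only: norm_mult)
qed

lemma inH_rho:
  assumes "inH p f \<pi> S \<phi>"
  shows "inH p f \<pi> S (rho \<pi> S a \<phi>)"
  unfolding inH_def
proof
  show "\<forall>n x. x \<notin> X n \<longrightarrow> rho \<pi> S a \<phi> n x = 0"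
    by (simp add: rho_def)
  show "(\<lambda>(n, x). (cmod (rho \<pi> S a \<phi> n x))\<^sup>2 * wt p f n) summable_on Sigma UNIV X"
  proof (rule summable_on_comparison_test)
    show "(\<lambda>(n, x). C\<^sup>2 * ((cmod (\<phi> n x))\<^sup>2 * wt p f n)) summable_on Sigma UNIV X"
      using summable_on_cmult_right[OF inH_summable[OF assms], of "C\<^sup>2"] by (simp add: case_prod_unfold)
    fix nx assume "nx \<in> Sigma UNIV X"
    then obtain n x where nx: "nx = (n, x)" "x \<in> X n"
      by blast
    have "cmod (rho \<pi> S a \<phi> n x) \<le> C * cmod (\<phi> n x)"
      using rho_le_level_bound[OF nx(2)] a_level_bound_le_C[of n]
      by (meson mult_right_mono norm_ge_zero order_trans)
    then show "(case nx of (n, x) \<Rightarrow> (cmod (rho \<pi> S a \<phi> n x))\<^sup>2 * wt p f n)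
        \<le> (case nx of (n, x) \<Rightarrow> C\<^sup>2 * ((cmod (\<phi> n x))\<^sup>2 * wt p f n))"
      using nx C_nonneg wt_pos[of n] by (simp add: weighted_sq_le_of_norm_le)
  qed (auto simp: wt_pos less_imp_le)
qed

lemma level_norm2_rho_le:
  assumes "inH p f \<pi> S \<phi>"
  shows "level_norm2 (rho \<pi> S a \<phi>) n \<le> (a_level_bound n)\<^sup>2 * level_norm2 \<phi> n"
proof -
  have "level_norm2 (rho \<pi> S a \<phi>) n
      \<le> infsum (\<lambda>x. (a_level_bound n)\<^sup>2 * ((cmod (\<phi> n x))\<^sup>2 * wt p f n)) (X n)"
    unfolding level_norm2_def
  proof (rule infsum_mono)
    show "(\<lambda>x. (cmod (rho \<pi> S a \<phi> n x))\<^sup>2 * wt p f n) summable_on X n"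
      by (rule inH_level_summable[OF inH_rho[OF assms]])
    show "(\<lambda>x. (a_level_bound n)\<^sup>2 * ((cmod (\<phi> n x))\<^sup>2 * wt p f n)) summable_on X n"
      by (rule summable_on_cmult_right[OF inH_level_summable[OF assms]])
  qed (use rho_le_level_bound a_level_bound_nonneg wt_pos less_imp_le in \<open>blast intro: weighted_sq_le_of_norm_le\<close>)
  also have "\<dots> = (a_level_bound n)\<^sup>2 * level_norm2 \<phi> n"
    unfolding level_norm2_def by (rule infsum_cmult_right) (rule inH_level_summable[OF assms])
  finally show ?thesis .
qed

definition level_majorant :: "int \<Rightarrow> real" where
  "level_majorant n = (a_level_bound n)\<^sup>2 * (q powi n / (1 - q))\<^sup>2"

lemma level_majorant_nonneg: "level_majorant n \<ge> 0"
  unfolding level_majorant_def by simp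

lemma level_norm2_rho_le_majorant:
  assumes "\<phi> \<in> domD p e f \<pi> S" and "hnorm2 p f \<pi> S (Dop p e f \<pi> S \<phi>) \<le> B"
  shows "level_norm2 (rho \<pi> S a \<phi>) n \<le> level_majorant n * B"
proof -
  have H: "inH p f \<pi> S \<phi>"
    using assms(1) unfolding domD_def by auto
  have "level_norm2 (rho \<pi> S a \<phi>) n \<le> (a_level_bound n)\<^sup>2 * level_norm2 \<phi> n"
    by (rule level_norm2_rho_le[OF H])
  also have "\<dots> \<le> (a_level_bound n)\<^sup>2 * ((q powi n / (1 - q))\<^sup>2 * B)"
    using level_norm2_le_Dop[OF assms] by (rule mult_left_mono) simp
  finally show ?thesis
    by (simp add: level_majorant_def)
qed

text \<open>For \<open>n \<rightarrow> \<infinity>\<close> the factor \<open>q\<^sup>2\<^sup>n\<close> decays; for \<open>n \<rightarrow> -\<infinity>\<close> the decay of \<open>a\<close> wins since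
  \<open>a_level_bound n\<^sup>2 q\<^sup>2\<^sup>n \<le> C\<^sup>2 q\<^sup>2\<^sup>n\<^sup>(\<^sup>1\<^sup>-\<^sup>\<alpha>\<^sup>)\<close> and \<open>\<alpha> > 1\<close>.\<close>

lemma summable_level_majorant: "level_majorant summable_on UNIV"
proof -
  define Q where "Q = inverse q"
  have "Q > 1"
    unfolding Q_def using q_pos q_less_1 by (simp add: one_less_inverse)
  then have "Q < Q powr \<alpha>"
    using alpha_gt_1 powr_less_mono[of 1 \<alpha> Q] by simp
  define r where "r = max (q\<^sup>2) ((Q / Q powr \<alpha>)\<^sup>2)"
  have "0 \<le> r"
    unfolding r_def by (simp add: le_max_iff_disj)
  have "r < 1"
    using q_pos q_less_1 \<open>Q > 1\<close> \<open>Q < Q powr \<alpha>\<close> by (simp add: r_def power_less_one_iff abs_less_iff)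
  define K where "K = C\<^sup>2 / (1 - q)\<^sup>2"
  have bound: "level_majorant n \<le> K * r ^ nat \<bar>n\<bar>" for n
  proof (cases "n \<ge> 0")
    case True
    have "level_majorant n \<le> C\<^sup>2 * (q powi n / (1 - q))\<^sup>2"
      unfolding level_majorant_def using a_level_bound_le_C[of n] a_level_bound_nonneg[of n]
      by (intro mult_right_mono power_mono) auto
    also have "\<dots> = K * (q\<^sup>2) ^ nat \<bar>n\<bar>"
      using True by (simp add: K_def power_int_def power_divide flip: power_mult)
        (simp add: power_mult_distrib mult.commute power_mult)
    also have "\<dots> \<le> K * r ^ nat \<bar>n\<bar>"
      unfolding K_def r_def by (intro mult_left_mono power_mono) auto
    finally show ?thesis .
  next
    case False
    define k where "k = nat (- n)"
    have qn: "q powi n = Q ^ k"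
      using False unfolding Q_def k_def by (simp add: power_int_def)
    have "(Q ^ k) powr \<alpha> = (Q powr \<alpha>) ^ k"
      using \<open>Q > 1\<close> by (simp add: powr_realpow[symmetric] powr_powr powr_power mult.commute)
    have "level_majorant n \<le> (C / (q powi n) powr \<alpha>)\<^sup>2 * (q powi n / (1 - q))\<^sup>2"
      unfolding level_majorant_def using a_level_bound_le_decay[of n] a_level_bound_nonneg[of n]
      by (intro mult_right_mono power_mono) auto
    also have "\<dots> = K * ((Q / Q powr \<alpha>)\<^sup>2) ^ k"
      unfolding K_def qn \<open>(Q ^ k) powr \<alpha> = (Q powr \<alpha>) ^ k\<close> using \<open>Q > 1\<close>
      by (simp add: power_divide power_mult_distrib field_simps flip: power_mult)
    also have "\<dots> \<le> K * r ^ k"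
      unfolding K_def r_def by (intro mult_left_mono power_mono max.cobounded2) auto
    also have "k = nat \<bar>n\<bar>"
      using False by (simp add: k_def)
    finally show ?thesis .
  qed
  have "(\<lambda>n. K * r ^ nat \<bar>n\<bar>) summable_on UNIV"
    by (rule summable_on_cmult_right[OF summable_on_geometric_abs_int[OF \<open>0 \<le> r\<close> \<open>r < 1\<close>]])
  then show ?thesis
    by (rule summable_on_comparison_test) (simp_all add: bound level_majorant_nonneg)
qed

section \<open>Compactness\<close>

lemma exists_radius_decay_le:
  assumes "\<eta> > 0" and "H \<ge> 0"
  obtains R where "R \<ge> 0" and "(C / (1 + R powr \<alpha>))\<^sup>2 * H \<le> \<eta>"
proof -
  define R where "R = max 1 (C\<^sup>2 * H / \<eta>)"
  define t where "t = R powr \<alpha>"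
  have "R \<ge> 1"
    unfolding R_def by simp
  then have "R \<le> t"
    unfolding t_def using alpha_gt_1 powr_mono[of 1 \<alpha> R] by simp
  then have "C\<^sup>2 * H \<le> t * \<eta>"
    using assms by (simp add: R_def pos_divide_le_eq)
  also have "\<dots> \<le> (1 + t)\<^sup>2 * \<eta>"
    using assms \<open>R \<le> t\<close> \<open>R \<ge> 1\<close> by (intro mult_right_mono) (auto simp: power2_eq_square algebra_simps)
  finally have "(C / (1 + t))\<^sup>2 * H \<le> \<eta>"
    using \<open>R \<le> t\<close> \<open>R \<ge> 1\<close> by (simp add: power_divide pos_divide_le_eq mult.commute)
  then show ?thesis
    using \<open>R \<ge> 1\<close> unfolding t_def by (intro that[of R]) auto
qed

lemma level_norm2_rho_beyond_le:
  assumes \<phi>: "\<phi> \<in> domD p e f \<pi> S" and B: "hnorm2 p f \<pi> S (Dop p e f \<pi> S \<phi>) \<le> B" and "R \<ge> 0"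
  shows "infsum (\<lambda>x. (cmod (rho \<pi> S a \<phi> n x))\<^sup>2 * wt p f n) {x \<in> X n. R < v x}
    \<le> (C / (1 + R powr \<alpha>))\<^sup>2 * ((q powi n / (1 - q))\<^sup>2 * B)"
proof -
  have H: "inH p f \<pi> S \<phi>"
    using \<phi> unfolding domD_def by auto
  define c where "c = C / (1 + R powr \<alpha>)"
  define T where "T = {x \<in> X n. R < v x}"
  have "T \<subseteq> X n"
    unfolding T_def by auto
  have \<phi>_summable: "(\<lambda>x. (cmod (\<phi> n x))\<^sup>2 * wt p f n) summable_on T"
    using inH_level_summable[OF H] \<open>T \<subseteq> X n\<close> by (rule summable_on_subset)
  have "infsum (\<lambda>x. (cmod (rho \<pi> S a \<phi> n x))\<^sup>2 * wt p f n) T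
      \<le> infsum (\<lambda>x. c\<^sup>2 * ((cmod (\<phi> n x))\<^sup>2 * wt p f n)) T"
  proof (rule infsum_mono)
    show "(\<lambda>x. (cmod (rho \<pi> S a \<phi> n x))\<^sup>2 * wt p f n) summable_on T"
      using inH_level_summable[OF inH_rho[OF H]] \<open>T \<subseteq> X n\<close> by (rule summable_on_subset)
    show "(\<lambda>x. c\<^sup>2 * ((cmod (\<phi> n x))\<^sup>2 * wt p f n)) summable_on T"
      by (rule summable_on_cmult_right[OF \<phi>_summable])
    fix x assume "x \<in> T"
    then have x: "x \<in> X n" "R < v x"
      by (auto simp: T_def)
    show "(cmod (rho \<pi> S a \<phi> n x))\<^sup>2 * wt p f n \<le> c\<^sup>2 * ((cmod (\<phi> n x))\<^sup>2 * wt p f n)"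
      unfolding c_def using rho_le_beyond[OF x(1) \<open>R \<ge> 0\<close> x(2)] C_nonneg wt_pos[of n]
      by (intro weighted_sq_le_of_norm_le) (auto intro: add_pos_nonneg)
  qed
  also have "\<dots> = c\<^sup>2 * infsum (\<lambda>x. (cmod (\<phi> n x))\<^sup>2 * wt p f n) T"
    by (rule infsum_cmult_right[OF \<phi>_summable])
  also have "\<dots> \<le> c\<^sup>2 * level_norm2 \<phi> n"
    unfolding level_norm2_def using inH_level_summable[OF H] \<open>T \<subseteq> X n\<close> wt_pos
    by (intro mult_left_mono infsum_mono2 \<phi>_summable) (auto simp: less_imp_le)
  also have "\<dots> \<le> c\<^sup>2 * ((q powi n / (1 - q))\<^sup>2 * B)"
    using level_norm2_le_Dop[OF \<phi> B] by (rule mult_left_mono) simp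
  finally show ?thesis
    unfolding c_def T_def .
qed

text \<open>Outside finitely many levels the majorant is small; on each of the finitely many remaining
  levels only the finitely many points with \<open>v x \<le> R\<close> carry mass, because \<open>a\<close> is small beyond \<open>R\<close>.\<close>

lemma rho_tail_le:
  assumes \<phi>: "\<phi> \<in> domD p e f \<pi> S" and B: "hnorm2 p f \<pi> S (Dop p e f \<pi> S \<phi>) \<le> B"
    and "finite F" and "R \<ge> 0"
  shows "infsum (\<lambda>(n, x). (cmod (rho \<pi> S a \<phi> n x))\<^sup>2 * wt p f n)
            (Sigma UNIV X - Sigma F (\<lambda>n. {x \<in> X n. v x \<le> R}))
     \<le> (C / (1 + R powr \<alpha>))\<^sup>2 * (\<Sum>n\<in>F. (q powi n / (1 - q))\<^sup>2 * B)
        + infsum (\<lambda>n. level_majorant n * B) (UNIV - F)"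
proof -
  have H: "inH p f \<pi> S (rho \<pi> S a \<phi>)"
    using \<phi> inH_rho unfolding domD_def by auto
  define sq where "sq n x = (cmod (rho \<pi> S a \<phi> n x))\<^sup>2 * wt p f n" for n x
  define T where "T n = (if n \<in> F then {x \<in> X n. R < v x} else X n)" for n
  define t where "t n = infsum (sq n) (T n)" for n
  have TX: "T n \<subseteq> X n" for n
    unfolding T_def by auto
  have tail_eq: "Sigma UNIV X - Sigma F (\<lambda>n. {x \<in> X n. v x \<le> R}) = Sigma UNIV T"
    unfolding T_def by (auto split: if_splits)
  have summable: "(\<lambda>(n, x). sq n x) summable_on Sigma UNIV T"
    unfolding sq_def using inH_summable[OF H] by (rule summable_on_subset) (use TX in auto)
  have t_summable: "t summable_on UNIV"
    unfolding t_def using summable_on_Sigma_banach[OF summable] .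
  have "t n \<le> level_majorant n * B" for n
  proof -
    have "t n \<le> level_norm2 (rho \<pi> S a \<phi>) n"
      unfolding t_def level_norm2_def sq_def using inH_level_summable[OF H] TX wt_pos
      by (intro infsum_mono2 summable_on_subset[OF inH_level_summable[OF H]]) (auto simp: less_imp_le)
    then show ?thesis
      using level_norm2_rho_le_majorant[OF \<phi> B, of n] by linarith
  qed
  then have "infsum t (UNIV - F) \<le> infsum (\<lambda>n. level_majorant n * B) (UNIV - F)"
    using summable_on_subset[OF t_summable] summable_on_subset[OF summable_on_cmult_left[OF summable_level_majorant]]
    by (intro infsum_mono) auto
  moreover have "infsum t F \<le> (C / (1 + R powr \<alpha>))\<^sup>2 * (\<Sum>n\<in>F. (q powi n / (1 - q))\<^sup>2 * B)"
    using \<open>finite F\<close> level_norm2_rho_beyond_le[OF \<phi> B \<open>R \<ge> 0\<close>]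
    by (simp add: t_def T_def sq_def[abs_def] sum_distrib_left sum_mono)
  moreover have "infsum t UNIV = infsum t F + infsum t (UNIV - F)"
    using infsum_Un_disjoint[OF summable_on_subset[OF t_summable] summable_on_subset[OF t_summable], of F "UNIV - F"]
    by simp
  moreover have "infsum (\<lambda>(n, x). sq n x) (Sigma UNIV T) = infsum t UNIV"
    unfolding t_def using infsum_Sigma'_banach[OF summable] by simp
  ultimately show ?thesis
    unfolding tail_eq sq_def by linarith
qed

lemma rho_uniformly_tight:
  assumes "\<eta> > 0" and "B \<ge> 0"
  obtains K where "finite K" and "K \<subseteq> Sigma UNIV X"
    and "\<And>\<phi>. \<phi> \<in> domD p e f \<pi> S \<Longrightarrow> hnorm2 p f \<pi> S (Dop p e f \<pi> S \<phi>) \<le> B \<Longrightarrow>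
      infsum (\<lambda>(n, x). (cmod (rho \<pi> S a \<phi> n x))\<^sup>2 * wt p f n) (Sigma UNIV X - K) \<le> \<eta>"
proof -
  have "\<eta> / 2 > 0"
    using \<open>\<eta> > 0\<close> by simp
  with infsum_tail_small[OF summable_on_cmult_left[OF summable_level_majorant]]
  obtain F where F: "finite F" "infsum (\<lambda>n. level_majorant n * B) (UNIV - F) \<le> \<eta> / 2"
    by blast
  define H where "H = (\<Sum>n\<in>F. (q powi n / (1 - q))\<^sup>2 * B)"
  have "H \<ge> 0"
    unfolding H_def using \<open>B \<ge> 0\<close> by (simp add: sum_nonneg)
  then obtain R where R: "R \<ge> 0" "(C / (1 + R powr \<alpha>))\<^sup>2 * H \<le> \<eta> / 2"
    using exists_radius_decay_le[of "\<eta> / 2" H] \<open>\<eta> > 0\<close> by auto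
  show ?thesis
  proof
    show "finite (Sigma F (\<lambda>n. {x \<in> X n. v x \<le> R}))"
      using F(1) finite_Xset_bounded by blast
    show "Sigma F (\<lambda>n. {x \<in> X n. v x \<le> R}) \<subseteq> Sigma UNIV X"
      by auto
    fix \<phi> assume "\<phi> \<in> domD p e f \<pi> S" "hnorm2 p f \<pi> S (Dop p e f \<pi> S \<phi>) \<le> B"
    from rho_tail_le[OF this F(1) R(1)]
    show "infsum (\<lambda>(n, x). (cmod (rho \<pi> S a \<phi> n x))\<^sup>2 * wt p f n)
        (Sigma UNIV X - Sigma F (\<lambda>n. {x \<in> X n. v x \<le> R})) \<le> \<eta>"
      using F(2) R(2) unfolding H_def by linarith
  qed
qed

lemma rho_coordinate_le:
  assumes "\<phi> \<in> domD p e f \<pi> S" and "hnorm2 p f \<pi> S (Dop p e f \<pi> S \<phi>) \<le> B" and "x \<in> X n"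
  shows "cmod (rho \<pi> S a \<phi> n x) \<le> sqrt (level_majorant n * B / wt p f n)"
proof -
  have H: "inH p f \<pi> S (rho \<pi> S a \<phi>)"
    using assms(1) inH_rho unfolding domD_def by auto
  have "(cmod (rho \<pi> S a \<phi> n x))\<^sup>2 * wt p f n \<le> level_norm2 (rho \<pi> S a \<phi>) n"
    unfolding level_norm2_def using inH_level_summable[OF H] assms(3) wt_pos
    by (intro le_infsum_single) (auto simp: less_imp_le)
  also have "\<dots> \<le> level_majorant n * B"
    by (rule level_norm2_rho_le_majorant[OF assms(1,2)])
  finally have "(cmod (rho \<pi> S a \<phi> n x))\<^sup>2 \<le> level_majorant n * B / wt p f n"
    using wt_pos[of n] by (simp add: pos_le_divide_eq)
  then show ?thesis
    using real_sqrt_le_mono by fastforce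
qed

theorem rhoDinv_compact: "rhoDinv_compact p e f \<pi> S a"
  unfolding rhoDinv_compact_def
proof (intro allI impI, elim conjE exE)
  fix \<phi>s :: "nat \<Rightarrow> int \<Rightarrow> 'a \<Rightarrow> complex" and B
  assume "\<forall>j. \<phi>s j \<in> domD p e f \<pi> S" and "\<forall>j. hnorm2 p f \<pi> S (Dop p e f \<pi> S (\<phi>s j)) \<le> B"
  then have dom: "\<phi>s j \<in> domD p e f \<pi> S" and B: "hnorm2 p f \<pi> S (Dop p e f \<pi> S (\<phi>s j)) \<le> B" for j
    by auto
  have "B \<ge> 0"
    using B[of 0] hnorm2_nonneg by (rule order_trans[rotated])
  define I where "I = Sigma UNIV X"
  define w where "w nx = wt p f (fst nx)" for nx :: "int \<times> 'a"
  define G where "G j nx = rho \<pi> S a (\<phi>s j) (fst nx) (snd nx)" for j nx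
  have "countable I"
    unfolding I_def by (intro countable_SIGMA countable_Xset) simp
  moreover have "w nx \<ge> 0" for nx
    unfolding w_def by (simp add: wt_pos less_imp_le)
  moreover have "(\<lambda>nx. (norm (G j nx))\<^sup>2 * w nx) summable_on I" for j
    using inH_summable[OF inH_rho, of "\<phi>s j"] dom[of j]
    unfolding G_def w_def I_def domD_def by (simp add: case_prod_unfold)
  moreover have "bounded (range (\<lambda>j. G j nx))" if "nx \<in> I" for nx
  proof -
    obtain n x where nx: "nx = (n, x)" "x \<in> X n"
      using \<open>nx \<in> I\<close> unfolding I_def by blast
    show ?thesis
      unfolding bounded_iff G_def nx(1)
      using rho_coordinate_le[OF dom B nx(2)] by auto
  qed
  moreover have "\<exists>K. finite K \<and> K \<subseteq> I \<and> (\<forall>j. infsum (\<lambda>nx. (norm (G j nx))\<^sup>2 * w nx) (I - K) \<le> \<eta>)"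
    if \<eta>: "\<eta> > 0" for \<eta>
  proof -
    obtain K where K: "finite K" "K \<subseteq> I"
      and tail: "\<And>\<phi>. \<phi> \<in> domD p e f \<pi> S \<Longrightarrow> hnorm2 p f \<pi> S (Dop p e f \<pi> S \<phi>) \<le> B \<Longrightarrow>
        infsum (\<lambda>(n, x). (cmod (rho \<pi> S a \<phi> n x))\<^sup>2 * wt p f n) (I - K) \<le> \<eta>"
      by (rule rho_uniformly_tight[OF \<eta> \<open>B \<ge> 0\<close>, folded I_def]) (rule that)
    have "infsum (\<lambda>nx. (norm (G j nx))\<^sup>2 * w nx) (I - K) \<le> \<eta>" for j
      using tail[OF dom B] unfolding G_def w_def by (simp add: case_prod_unfold)
    with K show ?thesis
      by blast
  qed
  ultimately have "\<exists>r::nat \<Rightarrow> nat. strict_mono r \<and>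
    (\<forall>\<epsilon>>0. \<exists>N. \<forall>i\<ge>N. \<forall>j\<ge>N. infsum (\<lambda>nx. (norm (G (r i) nx - G (r j) nx))\<^sup>2 * w nx) I < \<epsilon>)"
    by (rule weighted_sq_Cauchy_subseq)
  moreover have "hnorm2 p f \<pi> S (rho \<pi> S a (\<phi>s i) - rho \<pi> S a (\<phi>s j))
      = infsum (\<lambda>nx. (norm (G i nx - G j nx))\<^sup>2 * w nx) I" for i j
    unfolding hnorm2_def G_def w_def I_def by (simp add: case_prod_unfold)
  ultimately show "\<exists>r::nat \<Rightarrow> nat. strict_mono r \<and> (\<forall>\<epsilon>>0. \<exists>N. \<forall>i\<ge>N. \<forall>j\<ge>N.
      hnorm2 p f \<pi> S (rho \<pi> S a (\<phi>s (r i)) - rho \<pi> S a (\<phi>s (r j))) < \<epsilon>)"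
    by simp
qed

end

theorem mainTheorem2:
  fixes v :: "'a::field_char_0 \<Rightarrow> real" and p e f :: nat and \<pi> :: 'a and S :: "'a set"
    and a :: "'a \<Rightarrow> complex"
  assumes "local_field_data v p e f \<pi> S"
    and "v_continuous v a"
    and "\<exists>\<alpha> C. \<alpha> > 1 \<and> \<alpha> > real e * real f / 2 \<and>
           (\<forall>x. cmod (a x) \<le> C / (1 + v x powr \<alpha>))"
  shows "rhoDinv_compact p e f \<pi> S a"
proof -
  obtain \<alpha> C where "\<alpha> > 1" and "\<forall>x. cmod (a x) \<le> C / (1 + v x powr \<alpha>)"
    using assms(3) by blast
  then interpret decaying_multiplier v p e f \<pi> S a \<alpha> C
    using assms(1) by unfold_locales auto
  show ?thesis
    by (rule rhoDinv_compact)
qed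

end
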